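(* Let $d\ge 2$, $n\ge 2$, let $\mathcal G$ be an undirected graph on $\{1,\dots,n\}$ with $m$ edges, assumed acyclic and having a spanning tree, with an arbitrary orientation (incidence matrix $H$, $\bar H=H\otimes I_d$), and let $p(t)\in\mathbb R^{dn}$ be a time-varying configuration with well-defined bearings $g_k(t)$. Then the formation $\mathcal G(p(t))$ is bearing persistently exciting if and only if $g_k(t)$ is persistently exciting for all $k\in\{1,\dots,m\}$.
   Context: $e=\bar Hp=[e_1^\top,\dots,e_m^\top]^\top$, $g_k=e_k/\|e_k\|$. For $y\in\mathbb S^{d-1}$, $\pi_y=I_d-yy^\top$. $\Pi(t)=\mathrm{blkdiag}(\pi_{g_k(t)})$, $L=\bar H^\top\bar H$, $L_B(t)=\bar H^\top\Pi(t)\bar H$. A direction $y(t)\in\mathbb S^{d-1}$ is PE if there exist $T,\mu>0$ with $\int_t^{t+T}\pi_{y(\tau)}d\tau\ge\mu I_d$ for all $t$. $L_B$ is PE if there exist $T,\mu>0$ with $\int_t^{t+T}L_B(\tau)d\tau\ge\mu L$ for all $t$. The formation is bearing persistently exciting (BPE) if $\mathcal G$ has a spanning tree and $L_B$ is PE. *)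

theory Defs
  imports "HOL-Analysis.Analysis"
begin

text \<open>Edges are indexed by the finite type 'm, vertices by the finite type 'n.
  Edge k is oriented from src k to dst k; as an undirected edge it is {src k, dst k}.\<close>

definition joins :: "('m::finite \<Rightarrow> 'n::finite) \<Rightarrow> ('m::finite \<Rightarrow> 'n::finite) \<Rightarrow> 'm::finite \<Rightarrow> 'n::finite \<Rightarrow> 'n::finite \<Rightarrow> bool" where
  "joins src dst k u v \<longleftrightarrow> {src k, dst k} = {u, v}"

definition is_cycle_in :: "('m::finite \<Rightarrow> 'n::finite) \<Rightarrow> ('m::finite \<Rightarrow> 'n::finite) \<Rightarrow> 'm::finite set \<Rightarrow> 'm::finite list \<Rightarrow> 'n::finite list \<Rightarrow> bool" where
  "is_cycle_in src dst S ks vs \<longleftrightarrow>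
     ks \<noteq> [] \<and> distinct ks \<and> set ks \<subseteq> S \<and> length vs = Suc (length ks) \<and>
     List.hd vs = List.last vs \<and> distinct (List.tl vs) \<and>
     (\<forall>i < length ks. joins src dst (ks ! i) (vs ! i) (vs ! Suc i))"

definition acyclic_on :: "('m::finite \<Rightarrow> 'n::finite) \<Rightarrow> ('m::finite \<Rightarrow> 'n::finite) \<Rightarrow> 'm::finite set \<Rightarrow> bool" where
  "acyclic_on src dst S \<longleftrightarrow> \<not> (\<exists>ks vs. is_cycle_in src dst S ks vs)"

definition graph_acyclic :: "('m::finite \<Rightarrow> 'n::finite) \<Rightarrow> ('m::finite \<Rightarrow> 'n::finite) \<Rightarrow> bool" where
  "graph_acyclic src dst \<longleftrightarrow> acyclic_on src dst UNIV"

definition connected_on :: "('m::finite \<Rightarrow> 'n::finite) \<Rightarrow> ('m::finite \<Rightarrow> 'n::finite) \<Rightarrow> 'm::finite set \<Rightarrow> bool" where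
  "connected_on src dst S \<longleftrightarrow> (\<forall>u v. (\<lambda>x y. \<exists>k\<in>S. joins src dst k x y)\<^sup>*\<^sup>* u v)"

definition has_spanning_tree :: "('m::finite \<Rightarrow> 'n::finite) \<Rightarrow> ('m::finite \<Rightarrow> 'n::finite) \<Rightarrow> bool" where
  "has_spanning_tree src dst \<longleftrightarrow> (\<exists>S. acyclic_on src dst S \<and> connected_on src dst S)"

definition incidence :: "('m::finite \<Rightarrow> 'n::finite) \<Rightarrow> ('m::finite \<Rightarrow> 'n::finite) \<Rightarrow> real^'n::finite^'m::finite" where
  "incidence src dst = (\<chi> k i. if i = dst k then 1 else if i = src k then -1 else 0)"

text \<open>Kronecker product with the identity: Hbar = H \<otimes> I_d, rows indexed by (k,a), columns by (i,b).\<close>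
definition kron_id :: "real^'n::finite^'m::finite \<Rightarrow> real^('n::finite \<times> 'd::finite)^('m::finite \<times> 'd::finite)" where
  "kron_id H = (\<chi> r c. H $ fst r $ fst c * (if snd r = snd c then 1 else 0))"

definition Hbar :: "('m::finite \<Rightarrow> 'n::finite) \<Rightarrow> ('m::finite \<Rightarrow> 'n::finite) \<Rightarrow> real^('n::finite \<times> 'd::finite)^('m::finite \<times> 'd::finite)" where
  "Hbar src dst = kron_id (incidence src dst)"

definition edge_vec :: "('m::finite \<Rightarrow> 'n::finite) \<Rightarrow> ('m::finite \<Rightarrow> 'n::finite) \<Rightarrow> real^('n::finite \<times> 'd::finite) \<Rightarrow> 'm::finite \<Rightarrow> real^'d::finite" where
  "edge_vec src dst p k = (\<chi> a. (Hbar src dst *v p) $ (k, a))"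

definition bearing :: "('m::finite \<Rightarrow> 'n::finite) \<Rightarrow> ('m::finite \<Rightarrow> 'n::finite) \<Rightarrow> real^('n::finite \<times> 'd::finite) \<Rightarrow> 'm::finite \<Rightarrow> real^'d::finite" where
  "bearing src dst p k = (1 / norm (edge_vec src dst p k)) *\<^sub>R edge_vec src dst p k"

definition proj_perp :: "real^'d::finite \<Rightarrow> real^'d::finite^'d::finite" where
  "proj_perp y = mat 1 - (\<chi> i j. y $ i * y $ j)"

definition blk_proj :: "('m::finite \<Rightarrow> real^'d::finite) \<Rightarrow> real^('m::finite \<times> 'd::finite)^('m::finite \<times> 'd::finite)" where
  "blk_proj g = (\<chi> r c. if fst r = fst c then proj_perp (g (fst r)) $ snd r $ snd c else 0)"

definition lap :: "('m::finite \<Rightarrow> 'n::finite) \<Rightarrow> ('m::finite \<Rightarrow> 'n::finite) \<Rightarrow> real^('n::finite \<times> 'd::finite)^('n::finite \<times> 'd::finite)" where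
  "lap src dst = transpose (Hbar src dst) ** Hbar src dst"

definition bearing_lap :: "('m::finite \<Rightarrow> 'n::finite) \<Rightarrow> ('m::finite \<Rightarrow> 'n::finite) \<Rightarrow> real^('n::finite \<times> 'd::finite) \<Rightarrow> real^('n::finite \<times> 'd::finite)^('n::finite \<times> 'd::finite)" where
  "bearing_lap src dst p = transpose (Hbar src dst) ** blk_proj (bearing src dst p) ** Hbar src dst"

definition loewner_le :: "real^'k::finite^'k::finite \<Rightarrow> real^'k::finite^'k::finite \<Rightarrow> bool" where
  "loewner_le A B \<longleftrightarrow> (\<forall>x. 0 \<le> x \<bullet> ((B - A) *v x))"

definition PE_direction :: "(real \<Rightarrow> real^'d::finite) \<Rightarrow> bool" where
  "PE_direction y \<longleftrightarrow> (\<exists>T \<mu>. T > 0 \<and> \<mu> > 0 \<and> (\<forall>t.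
      (\<lambda>\<tau>. proj_perp (y \<tau>)) integrable_on {t..t+T} \<and>
      loewner_le (\<mu> *\<^sub>R mat 1) (integral {t..t+T} (\<lambda>\<tau>. proj_perp (y \<tau>)))))"

definition PE_bearing_lap :: "('m::finite \<Rightarrow> 'n::finite) \<Rightarrow> ('m::finite \<Rightarrow> 'n::finite) \<Rightarrow> (real \<Rightarrow> real^('n::finite \<times> 'd::finite)) \<Rightarrow> bool" where
  "PE_bearing_lap src dst p \<longleftrightarrow> (\<exists>T \<mu>. T > 0 \<and> \<mu> > 0 \<and> (\<forall>t.
      (\<lambda>\<tau>. bearing_lap src dst (p \<tau>)) integrable_on {t..t+T} \<and>
      loewner_le (\<mu> *\<^sub>R lap src dst) (integral {t..t+T} (\<lambda>\<tau>. bearing_lap src dst (p \<tau>)))))"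

definition BPE :: "('m::finite \<Rightarrow> 'n::finite) \<Rightarrow> ('m::finite \<Rightarrow> 'n::finite) \<Rightarrow> (real \<Rightarrow> real^('n::finite \<times> 'd::finite)) \<Rightarrow> bool" where
  "BPE src dst p \<longleftrightarrow> has_spanning_tree src dst \<and> PE_bearing_lap src dst p"

end

theory Submission
  imports Defs "HOL-Library.Transitive_Closure_Table"
begin

(* Write E_k for the k-th block row of Hbar. Both Laplacians are sums of congruences of the
   per-edge projections, L_B = sum_k E_k^T pi_{g_k} E_k and L = sum_k E_k^T E_k. Persistent
   excitation is preserved by congruences and by finite sums of positive semidefinite terms
   (take the longest window and the smallest level), which gives one direction. Conversely,
   deleting edge k from an acyclic graph separates its endpoints, so the matrix J that places a
   vector v at every vertex on the head's side of k and 0 elsewhere satisfies E_j J = [j = k] I;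
   the congruence by J extracts pi_{g_k} from L_B and I from L. *)

section \<open>Loewner order and congruences\<close>

lemma loewner_le_iff: "loewner_le A B \<longleftrightarrow> (\<forall>x. x \<bullet> (A *v x) \<le> x \<bullet> (B *v x))"
  by (simp add: loewner_le_def matrix_vector_mult_diff_rdistrib inner_diff_right)

lemma loewner_le_trans [trans]: "loewner_le A B \<Longrightarrow> loewner_le B C \<Longrightarrow> loewner_le A C"
  unfolding loewner_le_iff by (meson order_trans)

lemma loewner_le_sum:
  assumes "\<And>i. i \<in> I \<Longrightarrow> loewner_le (A i) (B i)"
  shows "loewner_le (\<Sum>i\<in>I. A i) (\<Sum>i\<in>I. B i)"
proof (cases "finite I")
  case True
  have "x \<bullet> ((\<Sum>i\<in>I. A i) *v x) \<le> x \<bullet> ((\<Sum>i\<in>I. B i) *v x)" for x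
    using True assms
    by (induction I rule: finite_induct)
      (simp_all add: loewner_le_iff matrix_vector_mult_add_rdistrib inner_add_right add_mono)
  then show ?thesis by (simp add: loewner_le_iff)
qed (simp add: loewner_le_iff)

lemma loewner_le_scaleR_left_mono:
  assumes "a \<le> b" and "loewner_le 0 A"
  shows "loewner_le (a *\<^sub>R A) (b *\<^sub>R A)"
  using assms
  by (simp add: loewner_le_iff mult_right_mono flip: scaleR_matrix_vector_assoc)

lemma bounded_linear_inner_matrix_vector_mult:
  "bounded_linear (\<lambda>M::real^'n::finite^'m::finite. x \<bullet> (M *v z))"
  unfolding linear_conv_bounded_linear[symmetric]
  by (rule linearI) (simp_all add: matrix_vector_mult_add_rdistrib inner_add_right
      flip: scaleR_matrix_vector_assoc)

lemma bounded_linear_congruence: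
  "bounded_linear (\<lambda>M::real^'m::finite^'m. transpose J ** M ** (J::real^'n::finite^'m))"
  unfolding linear_conv_bounded_linear[symmetric]
  by (rule linearI) (simp_all add: matrix_add_ldistrib matrix_eq matrix_vector_mult_add_rdistrib
      matrix_scalar_ac scalar_matrix_assoc flip: matrix_vector_mul_assoc)

lemma inner_congruence:
  fixes J :: "real^'n::finite^'m::finite"
  shows "x \<bullet> ((transpose J ** M ** J) *v z) = (J *v x) \<bullet> (M *v (J *v z))"
proof -
  have "x \<bullet> ((transpose J ** M ** J) *v z) = ((M *v (J *v z)) v* J) \<bullet> x"
    by (simp add: inner_commute flip: matrix_vector_mul_assoc matrix_mul_assoc)
  also have "\<dots> = (J *v x) \<bullet> (M *v (J *v z))"
    by (rule trans[OF dot_lmul_matrix inner_commute])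
  finally show ?thesis .
qed

lemma matrix_eqI_inner:
  fixes A B :: "real^'n::finite^'m::finite"
  assumes "\<And>x z. x \<bullet> (A *v z) = x \<bullet> (B *v z)"
  shows "A = B"
  unfolding matrix_eq using assms vector_eq_ldot by blast

lemma inner_sum_matrix_vector_mult:
  fixes M :: "'i \<Rightarrow> real^'n::finite^'m::finite"
  shows "x \<bullet> ((\<Sum>i\<in>I. M i) *v z) = (\<Sum>i\<in>I. x \<bullet> (M i *v z))"
  using linear_sum[OF bounded_linear.linear[OF bounded_linear_inner_matrix_vector_mult]]
  by (simp add: o_def)

lemma loewner_le_congruence:
  fixes J :: "real^'n::finite^'m::finite"
  assumes "loewner_le A B"
  shows "loewner_le (transpose J ** A ** J) (transpose J ** B ** J)"
  using assms by (simp add: loewner_le_iff inner_congruence)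

section \<open>Persistent excitation\<close>

lemma integrable_inner_matrix_vector_mult:
  fixes F :: "real \<Rightarrow> real^'n::finite^'m::finite"
  assumes "F integrable_on S"
  shows "(\<lambda>\<tau>. x \<bullet> (F \<tau> *v z)) integrable_on S"
  using integrable_linear[OF assms bounded_linear_inner_matrix_vector_mult] by (simp add: o_def)

lemma integral_inner_matrix_vector_mult:
  fixes F :: "real \<Rightarrow> real^'n::finite^'m::finite"
  assumes "F integrable_on S"
  shows "integral S (\<lambda>\<tau>. x \<bullet> (F \<tau> *v z)) = x \<bullet> (integral S F *v z)"
  using integral_linear[OF assms bounded_linear_inner_matrix_vector_mult] by (simp add: o_def)

lemma loewner_le_integral_subset:
  fixes F :: "real \<Rightarrow> real^'k::finite^'k"
  assumes "S \<subseteq> S'" and "F integrable_on S" and "F integrable_on S'"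
    and "\<And>\<tau>. loewner_le 0 (F \<tau>)"
  shows "loewner_le (integral S F) (integral S' F)"
  unfolding loewner_le_iff
proof
  fix x
  have "integral S (\<lambda>\<tau>. x \<bullet> (F \<tau> *v x)) \<le> integral S' (\<lambda>\<tau>. x \<bullet> (F \<tau> *v x))"
    using assms by (intro integral_subset_le integrable_inner_matrix_vector_mult)
      (auto simp: loewner_le_iff)
  then show "x \<bullet> (integral S F *v x) \<le> x \<bullet> (integral S' F *v x)"
    using assms by (simp add: integral_inner_matrix_vector_mult)
qed

lemma integrable_on_atLeastAtMost_of_windows:
  fixes f :: "real \<Rightarrow> 'a::banach"
  assumes "T > 0" and windows: "\<And>t. f integrable_on {t..t + T}"
  shows "f integrable_on {a..b}"
proof -
  have multiple: "f integrable_on {t..t + real n * T}" for n t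
  proof (induction n)
    case (Suc n)
    have "t \<le> t + real n * T" "t + real n * T \<le> t + real n * T + T"
      using \<open>T > 0\<close> by auto
    then have "f integrable_on {t..t + real n * T + T}"
      by (rule Henstock_Kurzweil_Integration.integrable_combine[OF _ _ Suc windows])
    then show ?case by (simp add: algebra_simps)
  qed (use integrable_on_refl[of f t] in simp)
  obtain n where "(b - a) / T < real n" using reals_Archimedean2 by blast
  then have "b \<le> a + real n * T" using \<open>T > 0\<close> by (simp add: field_simps)
  then show ?thesis by (intro integrable_on_subinterval[OF multiple[of a n]]) auto
qed

definition persistently_exciting :: "(real \<Rightarrow> real^'k::finite^'k) \<Rightarrow> real^'k^'k \<Rightarrow> bool" where
  "persistently_exciting F A \<longleftrightarrow> (\<exists>T \<mu>. T > 0 \<and> \<mu> > 0 \<and> (\<forall>t.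
      F integrable_on {t..t + T} \<and> loewner_le (\<mu> *\<^sub>R A) (integral {t..t + T} F)))"

lemma PE_direction_iff: "PE_direction y \<longleftrightarrow> persistently_exciting (\<lambda>\<tau>. proj_perp (y \<tau>)) (mat 1)"
  by (simp add: PE_direction_def persistently_exciting_def)

lemma PE_bearing_lap_iff:
  "PE_bearing_lap src dst p \<longleftrightarrow>
     persistently_exciting (\<lambda>\<tau>. bearing_lap src dst (p \<tau>)) (lap src dst)"
  by (simp add: PE_bearing_lap_def persistently_exciting_def)

lemma persistently_exciting_congruence:
  fixes J :: "real^'n::finite^'m::finite"
  assumes "persistently_exciting F A"
  shows "persistently_exciting (\<lambda>\<tau>. transpose J ** F \<tau> ** J) (transpose J ** A ** J)"
proof -
  let ?C = "\<lambda>M. transpose J ** M ** J"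
  obtain T \<mu> where "T > 0" "\<mu> > 0" and int: "\<And>t. F integrable_on {t..t + T}"
    and le: "\<And>t. loewner_le (\<mu> *\<^sub>R A) (integral {t..t + T} F)"
    using assms unfolding persistently_exciting_def by blast
  have "(?C \<circ> F) integrable_on {t..t + T}" for t
    using int by (rule integrable_linear[OF _ bounded_linear_congruence])
  moreover have "loewner_le (\<mu> *\<^sub>R ?C A) (integral {t..t + T} (?C \<circ> F))" for t
    using loewner_le_congruence[OF le[of t], of J]
    by (simp add: integral_linear[OF int bounded_linear_congruence]
        linear_scale[OF bounded_linear.linear[OF bounded_linear_congruence]])
  ultimately show ?thesis
    using \<open>T > 0\<close> \<open>\<mu> > 0\<close> unfolding persistently_exciting_def o_def by blast
qed

lemma persistently_exciting_sum:
  fixes F :: "'i::finite \<Rightarrow> real \<Rightarrow> real^'k::finite^'k"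
  assumes PE: "\<And>i. persistently_exciting (F i) (A i)"
    and F_psd: "\<And>i \<tau>. loewner_le 0 (F i \<tau>)" and A_psd: "\<And>i. loewner_le 0 (A i)"
  shows "persistently_exciting (\<lambda>\<tau>. \<Sum>i\<in>UNIV. F i \<tau>) (\<Sum>i\<in>UNIV. A i)"
proof -
  have "\<forall>i. \<exists>T \<mu>. T > 0 \<and> \<mu> > 0 \<and> (\<forall>t. F i integrable_on {t..t + T} \<and>
      loewner_le (\<mu> *\<^sub>R A i) (integral {t..t + T} (F i)))"
    using PE[unfolded persistently_exciting_def] by (intro allI)
  then have "\<exists>T \<mu>. \<forall>i. T i > 0 \<and> \<mu> i > 0 \<and> (\<forall>t. F i integrable_on {t..t + T i} \<and>
      loewner_le (\<mu> i *\<^sub>R A i) (integral {t..t + T i} (F i)))"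
    by (simp only: choice_iff)
  then obtain T \<mu> where pos: "\<And>i. T i > 0" "\<And>i. \<mu> i > 0"
    and int: "\<And>i t. F i integrable_on {t..t + T i}"
    and le: "\<And>i t. loewner_le (\<mu> i *\<^sub>R A i) (integral {t..t + T i} (F i))"
    by blast
  define T0 where "T0 = Max (range T)"
  define \<mu>0 where "\<mu>0 = Min (range \<mu>)"
  have T_le: "T i \<le> T0" and \<mu>_ge: "\<mu>0 \<le> \<mu> i" for i
    by (simp_all add: T0_def \<mu>0_def)
  have int_all: "F i integrable_on {a..b}" for i a b
    by (rule integrable_on_atLeastAtMost_of_windows[OF pos(1) int])
  have le_sum: "loewner_le (\<mu>0 *\<^sub>R (\<Sum>i\<in>UNIV. A i)) (\<Sum>i\<in>UNIV. integral {t..t + T0} (F i))" for t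
    unfolding scaleR_sum_right
  proof (rule loewner_le_sum)
    fix i
    have "loewner_le (\<mu>0 *\<^sub>R A i) (\<mu> i *\<^sub>R A i)"
      using \<mu>_ge A_psd by (rule loewner_le_scaleR_left_mono)
    also have "loewner_le (\<mu> i *\<^sub>R A i) (integral {t..t + T i} (F i))"
      by (rule le)
    also have "loewner_le (integral {t..t + T i} (F i)) (integral {t..t + T0} (F i))"
      using T_le[of i] by (intro loewner_le_integral_subset int_all F_psd) auto
    finally show "loewner_le (\<mu>0 *\<^sub>R A i) (integral {t..t + T0} (F i))" .
  qed
  have "(\<lambda>\<tau>. \<Sum>i\<in>UNIV. F i \<tau>) integrable_on {t..t + T0}
      \<and> loewner_le (\<mu>0 *\<^sub>R (\<Sum>i\<in>UNIV. A i)) (integral {t..t + T0} (\<lambda>\<tau>. \<Sum>i\<in>UNIV. F i \<tau>))" for t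
    using le_sum[of t] by (simp add: integrable_sum int_all integral_sum)
  moreover have "T0 > 0" "\<mu>0 > 0"
    using pos T_le[of undefined] by (auto simp: \<mu>0_def intro: less_le_trans)
  ultimately show ?thesis
    unfolding persistently_exciting_def by blast
qed

section \<open>Projections and the incidence matrix\<close>

lemma proj_perp_mult: "proj_perp y *v v = v - (y \<bullet> v) *\<^sub>R y"
proof -
  have "(\<chi> i j. y $ i * y $ j) *v v = (y \<bullet> v) *\<^sub>R y"
    by (simp add: vec_eq_iff matrix_vector_mult_def inner_vec_def sum_distrib_left mult_ac)
  then show ?thesis
    by (simp add: proj_perp_def matrix_vector_mult_diff_rdistrib)
qed

lemma proj_perp_psd:
  assumes "norm y \<le> 1"
  shows "loewner_le 0 (proj_perp y)"
  unfolding loewner_le_iff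
proof
  fix v
  have "\<bar>y \<bullet> v\<bar> \<le> norm v"
    using Cauchy_Schwarz_ineq2[of y v] assms mult_right_mono[OF assms norm_ge_zero[of v]]
    by linarith
  then have "(y \<bullet> v)\<^sup>2 \<le> v \<bullet> v"
    by (metis abs_le_square_iff abs_norm_cancel power2_norm_eq_inner)
  then show "v \<bullet> (0 *v v) \<le> v \<bullet> (proj_perp y *v v)"
    by (simp add: proj_perp_mult inner_diff_right power2_eq_square inner_commute)
qed

lemma proj_perp_0: "proj_perp 0 = mat 1"
  by (simp add: proj_perp_def vec_eq_iff)

lemma blk_proj_0: "blk_proj (\<lambda>_. 0) = mat 1"
  by (simp add: blk_proj_def proj_perp_0 mat_def vec_eq_iff prod_eq_iff)

lemma norm_bearing_le_1: "norm (bearing src dst p k) \<le> 1"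
  by (simp add: bearing_def divide_le_eq_1)

definition edge_block ::
    "('m::finite \<Rightarrow> 'n::finite) \<Rightarrow> ('m \<Rightarrow> 'n) \<Rightarrow> 'm \<Rightarrow> real^('n \<times> 'd::finite)^'d" where
  "edge_block src dst k = (\<chi> a c. Hbar src dst $ (k, a) $ c)"

lemma edge_block_mult: "edge_block src dst k *v x = edge_vec src dst x k"
  by (simp add: edge_block_def edge_vec_def matrix_vector_mult_def)

lemma edge_vec_eq:
  assumes "src k \<noteq> dst k"
  shows "edge_vec src dst x k = (\<chi> a. x $ (dst k, a) - x $ (src k, a))"
proof -
  let ?c = "\<lambda>i. if i = dst k then 1 else if i = src k then -1 else 0 :: real"
  have "(Hbar src dst *v x) $ (k, a) =
      (\<Sum>i\<in>UNIV. \<Sum>b\<in>UNIV. ?c i * (if a = b then 1 else 0) * x $ (i, b))" for a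
    unfolding Hbar_def kron_id_def incidence_def matrix_vector_mult_def
    by (simp only: UNIV_Times_UNIV[symmetric] sum.cartesian_product' vec_lambda_beta
        fst_conv snd_conv)
  also have "\<dots> a = (\<Sum>i\<in>UNIV. ?c i * x $ (i, a))" for a
  proof -
    have "?c i * (if a = b then 1 else 0) * x $ (i, b) = (if a = b then ?c i * x $ (i, a) else 0)"
      for i b by simp
    then show ?thesis by (simp only: sum.delta' finite UNIV_I if_True)
  qed
  also have "\<dots> a = (\<Sum>i\<in>UNIV.
      (if dst k = i then x $ (i, a) else 0) - (if src k = i then x $ (i, a) else 0))" for a
    using assms by (intro sum.cong) auto
  also have "\<dots> a = x $ (dst k, a) - x $ (src k, a)" for a
    by (simp only: sum_subtractf sum.delta' finite UNIV_I if_True)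
  finally show ?thesis by (simp add: edge_vec_def vec_eq_iff)
qed

lemma inner_blk_proj_mult:
  "y \<bullet> (blk_proj g *v z) =
     (\<Sum>k\<in>UNIV. (\<chi> a. y $ (k, a)) \<bullet> (proj_perp (g k) *v (\<chi> a. z $ (k, a))))"
proof -
  have "y \<bullet> (blk_proj g *v z) = (\<Sum>k\<in>UNIV. \<Sum>a\<in>UNIV. y $ (k, a) *
      (\<Sum>k'\<in>UNIV. \<Sum>b\<in>UNIV. (if k = k' then proj_perp (g k) $ a $ b else 0) * z $ (k', b)))"
    unfolding inner_vec_def matrix_vector_mult_def blk_proj_def
    by (simp only: UNIV_Times_UNIV[symmetric] sum.cartesian_product' vec_lambda_beta
        fst_conv snd_conv inner_real_def)
  also have "\<dots> = (\<Sum>k\<in>UNIV. \<Sum>a\<in>UNIV. y $ (k, a) *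
      (\<Sum>b\<in>UNIV. proj_perp (g k) $ a $ b * z $ (k, b)))"
  proof -
    have "(\<Sum>k'\<in>UNIV. \<Sum>b\<in>UNIV. (if k = k' then proj_perp (g k) $ a $ b else 0) * z $ (k', b))
        = (\<Sum>k'\<in>UNIV. if k = k' then \<Sum>b\<in>UNIV. proj_perp (g k) $ a $ b * z $ (k, b) else 0)"
      for k a by (intro sum.cong) auto
    then show ?thesis by simp
  qed
  also have "\<dots> = (\<Sum>k\<in>UNIV. (\<chi> a. y $ (k, a)) \<bullet> (proj_perp (g k) *v (\<chi> a. z $ (k, a))))"
    by (simp add: inner_vec_def matrix_vector_mult_def)
  finally show ?thesis .
qed

lemma transpose_Hbar_blk_proj_Hbar:
  "transpose (Hbar src dst) ** blk_proj g ** Hbar src dst =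
     (\<Sum>k\<in>UNIV. transpose (edge_block src dst k) ** proj_perp (g k) ** edge_block src dst k)"
  by (rule matrix_eqI_inner) (simp add: inner_congruence inner_blk_proj_mult
      inner_sum_matrix_vector_mult edge_block_mult edge_vec_def)

lemma bearing_lap_eq_sum:
  "bearing_lap src dst p = (\<Sum>k\<in>UNIV.
     transpose (edge_block src dst k) ** proj_perp (bearing src dst p k) ** edge_block src dst k)"
  by (simp add: bearing_lap_def transpose_Hbar_blk_proj_Hbar)

lemma lap_eq_sum:
  "lap src dst = (\<Sum>k\<in>UNIV. transpose (edge_block src dst k) ** edge_block src dst k)"
  using transpose_Hbar_blk_proj_Hbar[of src dst "\<lambda>_. 0"]
  by (simp add: lap_def blk_proj_0 proj_perp_0)

section \<open>Cutting an edge of an acyclic graph\<close>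

definition linked_avoiding ::
    "('m::finite \<Rightarrow> 'n::finite) \<Rightarrow> ('m \<Rightarrow> 'n) \<Rightarrow> 'm \<Rightarrow> 'n \<Rightarrow> 'n \<Rightarrow> bool" where
  "linked_avoiding src dst k0 u v \<longleftrightarrow> (\<exists>k. k \<noteq> k0 \<and> joins src dst k u v)"

lemma rtrancl_path_nth:
  assumes "rtrancl_path r x xs y"
  shows "last (x # xs) = y \<and> (\<forall>i < length xs. r ((x # xs) ! i) ((x # xs) ! Suc i))"
  using assms by induction (auto simp: nth_Cons split: nat.split)

lemma is_cycle_in_close_path:
  assumes vs: "distinct vs" "vs \<noteq> []" "hd vs = dst k0" "last vs = src k0"
    and e: "\<And>i. i < length vs - 1 \<Longrightarrow> e i \<noteq> k0 \<and> joins src dst (e i) (vs ! i) (vs ! Suc i)"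
  shows "is_cycle_in src dst UNIV (k0 # map e [0..<length vs - 1]) (src k0 # vs)"
  unfolding is_cycle_in_def
proof (intro conjI allI impI)
  have "inj_on e {0..<length vs - 1}"
  proof (rule inj_onI)
    fix i j assume i: "i \<in> {0..<length vs - 1}" and j: "j \<in> {0..<length vs - 1}" and "e i = e j"
    then have "{vs ! i, vs ! Suc i} = {vs ! j, vs ! Suc j}"
      using e[of i] e[of j] by (auto simp: joins_def)
    with i j \<open>distinct vs\<close> show "i = j"
      by (auto simp: doubleton_eq_iff nth_eq_iff_index_eq)
  qed
  moreover have "k0 \<notin> e ` {0..<length vs - 1}"
    using e by force
  ultimately show "distinct (k0 # map e [0..<length vs - 1])"
    by (simp add: distinct_map)
  fix i assume i: "i < length (k0 # map e [0..<length vs - 1])"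
  show "joins src dst ((k0 # map e [0..<length vs - 1]) ! i) ((src k0 # vs) ! i) ((src k0 # vs) ! Suc i)"
  proof (cases i)
    case 0
    then show ?thesis using vs by (simp add: joins_def hd_conv_nth)
  next
    case (Suc j)
    then show ?thesis using e[of j] i by simp
  qed
qed (use vs in auto)

lemma acyclic_not_linked_avoiding:
  assumes "graph_acyclic src dst"
  shows "\<not> (linked_avoiding src dst k0)\<^sup>*\<^sup>* (dst k0) (src k0)"
proof
  assume "(linked_avoiding src dst k0)\<^sup>*\<^sup>* (dst k0) (src k0)"
  then obtain ys where "rtrancl_path (linked_avoiding src dst k0) (dst k0) ys (src k0)"
    unfolding rtranclp_eq_rtrancl_path ..
  then obtain xs where path: "rtrancl_path (linked_avoiding src dst k0) (dst k0) xs (src k0)"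
    and distinct: "distinct (dst k0 # xs)"
    by (rule rtrancl_path_distinct)
  let ?vs = "dst k0 # xs"
  define e where "e i = (SOME k. k \<noteq> k0 \<and> joins src dst k (?vs ! i) (?vs ! Suc i))" for i
  have last: "last ?vs = src k0"
    and linked: "\<And>i. i < length ?vs - 1 \<Longrightarrow> linked_avoiding src dst k0 (?vs ! i) (?vs ! Suc i)"
    using rtrancl_path_nth[OF path] by simp_all
  have edges: "e i \<noteq> k0 \<and> joins src dst (e i) (?vs ! i) (?vs ! Suc i)" if "i < length ?vs - 1" for i
    unfolding e_def by (rule someI_ex) (use linked[OF that] in \<open>simp only: linked_avoiding_def\<close>)
  have "is_cycle_in src dst UNIV (k0 # map e [0..<length ?vs - 1]) (src k0 # ?vs)"
    by (rule is_cycle_in_close_path[OF distinct _ _ last edges]) simp_all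
  then show False
    using assms by (auto simp: graph_acyclic_def acyclic_on_def)
qed

lemma acyclic_src_ne_dst:
  assumes "graph_acyclic src dst"
  shows "src k \<noteq> dst k"
  using acyclic_not_linked_avoiding[OF assms, of k] by (metis rtranclp.rtrancl_refl)

definition component_embedding ::
    "('m::finite \<Rightarrow> 'n::finite) \<Rightarrow> ('m \<Rightarrow> 'n) \<Rightarrow> 'm \<Rightarrow> real^'d::finite^('n \<times> 'd)" where
  "component_embedding src dst k0 =
     (\<chi> r b. if (linked_avoiding src dst k0)\<^sup>*\<^sup>* (dst k0) (fst r) \<and> snd r = b then 1 else 0)"

lemma component_embedding_mult:
  "component_embedding src dst k0 *v v =
     (\<chi> r. if (linked_avoiding src dst k0)\<^sup>*\<^sup>* (dst k0) (fst r) then v $ snd r else 0)"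
  by (simp add: component_embedding_def matrix_vector_mult_def vec_eq_iff if_distrib if_distribR
      cong: if_cong)

lemma edge_block_component_embedding:
  assumes "graph_acyclic src dst"
  shows "edge_block src dst k ** component_embedding src dst k0 = (if k = k0 then mat 1 else 0)"
proof -
  have "joins src dst k (src k) (dst k)"
    by (simp add: joins_def)
  then have "k \<noteq> k0 \<Longrightarrow> (linked_avoiding src dst k0)\<^sup>*\<^sup>* (dst k0) (src k) \<longleftrightarrow>
      (linked_avoiding src dst k0)\<^sup>*\<^sup>* (dst k0) (dst k)"
    by (metis joins_def insert_commute linked_avoiding_def rtranclp.rtrancl_into_rtrancl)
  then show ?thesis
    using acyclic_not_linked_avoiding[OF assms, of k0]
    by (auto simp: matrix_eq edge_block_mult component_embedding_mult vec_eq_iff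
        edge_vec_eq[where k = k, OF acyclic_src_ne_dst[OF assms]] simp flip: matrix_vector_mul_assoc)
qed

lemma congruence_component_embedding_sum:
  fixes M :: "'m::finite \<Rightarrow> real^'d::finite^'d" and k0 :: 'm
  assumes "graph_acyclic src dst"
  shows "transpose (component_embedding src dst k0) **
      (\<Sum>k\<in>UNIV. transpose (edge_block src dst k) ** M k ** edge_block src dst k) **
      (component_embedding src dst k0 :: real^'d^('n::finite \<times> 'd)) = M k0"
proof -
  let ?J = "component_embedding src dst k0 :: real^'d^('n \<times> 'd)"
  have summand: "transpose ?J ** (transpose (edge_block src dst k) ** M k ** edge_block src dst k) ** ?J
      = (if k = k0 then M k else 0)" for k
  proof -
    have "transpose ?J ** (transpose (edge_block src dst k) ** M k ** edge_block src dst k) ** ?J =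
        transpose (edge_block src dst k ** ?J) ** M k ** (edge_block src dst k ** ?J)"
      by (simp add: matrix_transpose_mul matrix_mul_assoc)
    then show ?thesis
      by (cases "k = k0") (simp_all add: edge_block_component_embedding[OF assms])
  qed
  have "transpose ?J ** (\<Sum>k\<in>UNIV. transpose (edge_block src dst k) ** M k ** edge_block src dst k) ** ?J
      = (\<Sum>k\<in>UNIV. transpose ?J ** (transpose (edge_block src dst k) ** M k ** edge_block src dst k) ** ?J)"
    by (rule linear_sum[OF bounded_linear.linear[OF bounded_linear_congruence]])
  also have "\<dots> = M k0"
    by (simp add: summand)
  finally show ?thesis .
qed

lemma PE_direction_if_PE_bearing_lap:
  fixes p :: "real \<Rightarrow> real^('n::finite \<times> 'd::finite)" and src dst :: "'m::finite \<Rightarrow> 'n"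
  assumes "graph_acyclic src dst" and "PE_bearing_lap src dst p"
  shows "PE_direction (\<lambda>t. bearing src dst (p t) k0)"
proof -
  let ?J = "component_embedding src dst k0 :: real^'d^('n \<times> 'd)"
  have lap: "transpose ?J ** lap src dst ** ?J = mat 1"
    using congruence_component_embedding_sum[OF assms(1), where M = "\<lambda>_. mat 1"]
    by (simp add: lap_eq_sum)
  have bearing_lap: "transpose ?J ** bearing_lap src dst (p \<tau>) ** ?J
      = proj_perp (bearing src dst (p \<tau>) k0)" for \<tau>
    by (simp add: bearing_lap_eq_sum congruence_component_embedding_sum[OF assms(1)])
  show ?thesis
    using persistently_exciting_congruence[OF assms(2)[unfolded PE_bearing_lap_iff], of ?J]
    by (simp add: PE_direction_iff lap bearing_lap)
qed

lemma PE_bearing_lap_if_PE_directions: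
  fixes p :: "real \<Rightarrow> real^('n::finite \<times> 'd::finite)" and src dst :: "'m::finite \<Rightarrow> 'n"
  assumes "\<forall>k. PE_direction (\<lambda>t. bearing src dst (p t) k)"
  shows "PE_bearing_lap src dst p"
proof -
  let ?E = "edge_block src dst :: 'm \<Rightarrow> real^('n \<times> 'd)^'d"
  have "persistently_exciting
      (\<lambda>\<tau>. \<Sum>k\<in>UNIV. transpose (?E k) ** proj_perp (bearing src dst (p \<tau>) k) ** ?E k)
      (\<Sum>k\<in>UNIV. transpose (?E k) ** ?E k)"
  proof (rule persistently_exciting_sum)
    fix k \<tau>
    show "persistently_exciting (\<lambda>\<tau>. transpose (?E k) ** proj_perp (bearing src dst (p \<tau>) k) ** ?E k)
        (transpose (?E k) ** ?E k)"
      using persistently_exciting_congruence[OF assms[rule_format, unfolded PE_direction_iff]]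
      by simp
    show "loewner_le 0 (transpose (?E k) ** proj_perp (bearing src dst (p \<tau>) k) ** ?E k)"
      using loewner_le_congruence[OF proj_perp_psd[OF norm_bearing_le_1], of "?E k"]
      by simp
    show "loewner_le 0 (transpose (?E k) ** ?E k)"
      using loewner_le_congruence[of 0 "mat 1" "?E k"] by (simp add: loewner_le_iff)
  qed
  then show ?thesis
    by (simp add: PE_bearing_lap_iff bearing_lap_eq_sum lap_eq_sum)
qed

theorem lemma4:
  fixes src dst :: "'m::finite \<Rightarrow> 'n::finite"
    and p :: "real \<Rightarrow> real^('n \<times> 'd::finite)"
  assumes "CARD('d) \<ge> 2" and "CARD('n) \<ge> 2"
    and "graph_acyclic src dst"
    and "has_spanning_tree src dst"
    and "\<forall>t k. edge_vec src dst (p t) k \<noteq> 0"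
  shows "BPE src dst p \<longleftrightarrow> (\<forall>k. PE_direction (\<lambda>t. bearing src dst (p t) k))"
  using PE_direction_if_PE_bearing_lap[OF assms(3)] PE_bearing_lap_if_PE_directions assms(4)
  unfolding BPE_def by blast

end
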